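(* Let $t_1>0$ and $c\ge0$. For hyper-exponential service times with $P(v>t)=\sum_{i=1}^k P_i e^{-\mu_i t}$ (where $0<\mu_1<\dots<\mu_k<\infty$, $P_i>0$, $\sum_iP_i=1$), mean $1/\mu$ with $\mu=\left(\sum_{i=1}^k P_i/\mu_i\right)^{-1}$ and variance $\sigma^2=2\sum_{i=1}^k P_i/\mu_i^2-\left(\sum_{i=1}^k P_i/\mu_i\right)^2$, let $\tau=\frac{\mu^2\sigma^2+c^2}{2\mu t_1}$. Compare with exponential service times with the same mean $1/\mu$, for which the corresponding constant is $\frac{1+c^2}{2\mu t_1}$. Then $$\tau\ge\frac{1+c^2}{2\mu t_1};$$ consequently, for two GI/H/n systems (one with the hyper-exponential, one with the exponential service time, both with arrival coefficient of variation $c$) having the same $t_1$, $\mu$, and the same sequences $\rho_n$ and $\delta_n$ satisfying $\lim\rho_n=1$, $\lim P\{Q_n\ge n\}=1$ and $P\{W_n>t_1\}\sim\delta_n$ with $\delta_n\to0$, the system with hyper-exponential service time needs a larger number of servers than the one with exponential service time.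
   Context: GI/H/n model: a queueing system with $n$ identical servers and a single unbounded buffer served in first-come-first-served order; inter-arrival times are i.i.d. with rate $\lambda_n$ and coefficient of variation $c$; service times are i.i.d. and independent of arrivals; $\rho_n=\lambda_n/(n\mu)$. $Q_n$ is the steady-state number of jobs in the system and $W_n$ the steady-state waiting time before service, with $n$ servers. In this setting (for $\delta_n\to0$, $\delta_n>0$) the three conditions $\rho_n\to1$, $P\{Q_n\ge n\}\to1$, $P\{W_n>t_1\}\sim\delta_n$ are equivalent to $\lim_{n}\frac{(1-\rho_n)n}{-\ln\delta_n}=\tau_*$ together with $\delta_n e^{k'\sqrt n}\to\infty$ for all $k'>0$, where $\tau_*=\frac{\mu^2\sigma^2+c^2}{2\mu t_1}$ with $\sigma^2$ the service-time variance; for exponential service $\tau_*=\frac{1+c^2}{2\mu t_1}$. $f(n)\sim g(n)$ means $f(n)/g(n)\to1$. *)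

theory Defs
  imports Complex_Main
begin

text \<open>Hyper-exponential service time with tail P(v>t) = sum_{i=1..k} P_i exp(-mu_i t).
  Phases indexed by {1..k}.\<close>

definition hyperexp_rate :: "nat \<Rightarrow> (nat \<Rightarrow> real) \<Rightarrow> (nat \<Rightarrow> real) \<Rightarrow> real" where
  "hyperexp_rate k P mu = inverse (\<Sum>i=1..k. P i / mu i)"

definition hyperexp_variance :: "nat \<Rightarrow> (nat \<Rightarrow> real) \<Rightarrow> (nat \<Rightarrow> real) \<Rightarrow> real" where
  "hyperexp_variance k P mu = 2 * (\<Sum>i=1..k. P i / (mu i)^2) - (\<Sum>i=1..k. P i / mu i)^2"

definition tau_star :: "real \<Rightarrow> real \<Rightarrow> real \<Rightarrow> real \<Rightarrow> real" where
  "tau_star mu sigma2 c t1 = (mu^2 * sigma2 + c^2) / (2 * mu * t1)"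

end

theory Submission
  imports Defs
begin

text \<open>A hyper-exponential service time is a mixture of exponentials with means \<open>1/\<mu>\<^sub>i\<close>,
  so its second moment is \<open>2 E[1/\<mu>\<^sub>I\<^sup>2] \<ge> 2 (E[1/\<mu>\<^sub>I])\<^sup>2\<close> by Jensen's inequality.
  Hence its squared coefficient of variation \<open>\<mu>\<^sup>2\<sigma>\<^sup>2\<close> is at least \<open>1\<close>, the value for
  exponential service with the same mean, and \<open>\<tau>\<^sub>*\<close> is monotone in \<open>\<mu>\<^sup>2\<sigma>\<^sup>2\<close>.\<close>

lemma weighted_mean_square_le:
  fixes p x :: "'a \<Rightarrow> real"
  assumes "\<And>i. i \<in> A \<Longrightarrow> p i \<ge> 0" and "sum p A = 1"
  shows "(\<Sum>i\<in>A. p i * x i)^2 \<le> (\<Sum>i\<in>A. p i * (x i)^2)"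
proof -
  define m where "m = (\<Sum>i\<in>A. p i * x i)"
  have "0 \<le> (\<Sum>i\<in>A. p i * (x i - m)^2)"
    by (rule sum_nonneg) (simp add: assms(1))
  also have "\<dots> = (\<Sum>i\<in>A. p i * (x i)^2 - 2 * m * (p i * x i) + m^2 * p i)"
    by (rule sum.cong) (simp_all add: power2_eq_square algebra_simps)
  also have "\<dots> = (\<Sum>i\<in>A. p i * (x i)^2) - m^2"
    by (simp add: sum.distrib sum_subtractf sum_distrib_left[symmetric] assms(2)
        m_def power2_eq_square)
  finally show ?thesis unfolding m_def by simp
qed

lemma hyperexp_scv_ge_one:
  assumes mu_pos: "\<And>i. 1 \<le> i \<Longrightarrow> i \<le> k \<Longrightarrow> mu i > 0"
    and P_nonneg: "\<And>i. 1 \<le> i \<Longrightarrow> i \<le> k \<Longrightarrow> P i \<ge> 0"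
    and P_sum: "(\<Sum>i=1..k. P i) = 1"
  shows "(hyperexp_rate k P mu)^2 * hyperexp_variance k P mu \<ge> 1"
proof -
  define m where "m = (\<Sum>i=1..k. P i / mu i)"
  define s where "s = (\<Sum>i=1..k. P i / (mu i)^2)"
  have "m^2 \<le> s"
    using weighted_mean_square_le[of "{1..k}" P "\<lambda>i. 1 / mu i"] P_nonneg P_sum
    by (simp add: m_def s_def power_one_over)
  moreover have "m \<noteq> 0"
  proof
    assume "m = 0"
    then have "\<forall>i\<in>{1..k}. P i / mu i = 0"
      unfolding m_def using P_nonneg mu_pos
      by (subst (asm) sum_nonneg_eq_0_iff) (auto intro: divide_nonneg_pos)
    then have "\<forall>i\<in>{1..k}. P i = 0" using mu_pos by (fastforce simp: less_irrefl)
    then show False using P_sum by simp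
  qed
  ultimately show ?thesis
    unfolding hyperexp_rate_def hyperexp_variance_def m_def[symmetric] s_def[symmetric]
    by (simp add: power_inverse field_simps)
qed

lemma tau_star_ge_exponential:
  assumes "mu > 0" and "t1 > 0" and "mu^2 * sigma2 \<ge> 1"
  shows "tau_star mu sigma2 c t1 \<ge> (1 + c^2) / (2 * mu * t1)"
  unfolding tau_star_def by (rule divide_right_mono) (use assms in auto)

theorem corollary13:
  fixes k :: nat and P mu :: "nat \<Rightarrow> real" and t1 c :: real
  assumes "t1 > 0" and "c \<ge> 0"
    and "k \<ge> 1"
    and "0 < mu 1"
    and "\<And>i j. 1 \<le> i \<Longrightarrow> i < j \<Longrightarrow> j \<le> k \<Longrightarrow> mu i < mu j"
    and "\<And>i. 1 \<le> i \<Longrightarrow> i \<le> k \<Longrightarrow> P i > 0"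
    and "(\<Sum>i=1..k. P i) = 1"
  shows "tau_star (hyperexp_rate k P mu) (hyperexp_variance k P mu) c t1
           \<ge> (1 + c^2) / (2 * hyperexp_rate k P mu * t1)"
proof -
  have mu_pos: "mu i > 0" if "1 \<le> i" "i \<le> k" for i
    using assms(4) assms(5)[of 1 i] that by (cases "i = 1") auto
  have scv: "(hyperexp_rate k P mu)^2 * hyperexp_variance k P mu \<ge> 1"
    by (rule hyperexp_scv_ge_one) (use mu_pos assms(6,7) less_imp_le in auto)
  have "(\<Sum>i=1..k. P i / mu i) > 0"
    by (rule sum_pos) (use assms(3,6) mu_pos in auto)
  then have "hyperexp_rate k P mu > 0"
    by (simp add: hyperexp_rate_def)
  then show ?thesis
    using tau_star_ge_exponential assms(1) scv by blast
qed

end
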